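(* Let $\mathcal E$ be a nest on a complex Banach space $X$ and let $E\in\mathcal E$. Then the weak*-closure in $X^*$ of $\operatorname{span}\{N^\perp: N\in\mathcal E,\ N_+\supsetneq E\}$ equals $E^\perp$.
   Context: A nest $\mathcal E$ on $X$ is a family of closed linear subspaces of $X$, totally ordered by inclusion, containing $\{0\}$ and $X$, and closed under arbitrary meets $\wedge$ (intersections) and joins $\vee$ (norm-closed linear spans of unions). For $E\in\mathcal E$, $E_+=\wedge\{F\in\mathcal E: E\subsetneq F\}$ (with the empty meet equal to $X$). For $S\subseteq X$, $S^\perp=\{f\in X^*: f(s)=0\ \forall s\in S\}$. *)

theory Defs
  imports "HOL-Analysis.Analysis"
begin

text \<open>The distribution has no class of complex vector spaces, so a complex Banach
space is modelled as a real Banach space equipped with a compatible complex scalar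
multiplication (extending the real one) that is absolutely homogeneous.\<close>

class complex_banach = banach +
  fixes cscale :: "complex \<Rightarrow> 'a \<Rightarrow> 'a" (infixr \<open>*\<^sub>C\<close> 75)
  assumes cscale_add_right: "a *\<^sub>C (x + y) = a *\<^sub>C x + a *\<^sub>C y"
    and cscale_add_left: "(a + b) *\<^sub>C x = a *\<^sub>C x + b *\<^sub>C x"
    and cscale_cscale: "a *\<^sub>C (b *\<^sub>C x) = (a * b) *\<^sub>C x"
    and cscale_one: "1 *\<^sub>C x = x"
    and scaleR_cscale: "r *\<^sub>R x = complex_of_real r *\<^sub>C x"
    and norm_cscale: "norm (a *\<^sub>C x) = cmod a * norm x"

definition closed_csubspace :: "'a::complex_banach set \<Rightarrow> bool" where
  "closed_csubspace M \<longleftrightarrow> closed M \<and> 0 \<in> M \<and>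
     (\<forall>x\<in>M. \<forall>y\<in>M. x + y \<in> M) \<and> (\<forall>c. \<forall>x\<in>M. c *\<^sub>C x \<in> M)"

definition closed_cspan :: "'a::complex_banach set \<Rightarrow> 'a set" where
  "closed_cspan S = \<Inter>{M. closed_csubspace M \<and> S \<subseteq> M}"

definition nest :: "'a::complex_banach set set \<Rightarrow> bool" where
  "nest \<E> \<longleftrightarrow> (\<forall>M\<in>\<E>. closed_csubspace M) \<and>
     (\<forall>M\<in>\<E>. \<forall>N\<in>\<E>. M \<subseteq> N \<or> N \<subseteq> M) \<and>
     {0} \<in> \<E> \<and> UNIV \<in> \<E> \<and>
     (\<forall>\<F>\<subseteq>\<E>. \<Inter>\<F> \<in> \<E>) \<and>
     (\<forall>\<F>\<subseteq>\<E>. closed_cspan (\<Union>\<F>) \<in> \<E>)"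

text \<open>E_+ : meet of all strictly larger members (empty meet = X = UNIV).\<close>
definition nest_succ :: "'a::complex_banach set set \<Rightarrow> 'a set \<Rightarrow> 'a set" where
  "nest_succ \<E> E = \<Inter>{F\<in>\<E>. E \<subset> F}"

definition cdual :: "('a::complex_banach \<Rightarrow> complex) set" where
  "cdual = {f. (\<forall>x y. f (x + y) = f x + f y) \<and> (\<forall>c x. f (c *\<^sub>C x) = c * f x) \<and>
               (\<exists>K. \<forall>x. cmod (f x) \<le> K * norm x)}"

definition annih :: "'a::complex_banach set \<Rightarrow> ('a \<Rightarrow> complex) set" where
  "annih S = {f\<in>cdual. \<forall>s\<in>S. f s = 0}"

definition fspan :: "('a \<Rightarrow> complex) set \<Rightarrow> ('a \<Rightarrow> complex) set" where
  "fspan S = {f. \<exists>(n::nat) c g. (\<forall>i<n. g i \<in> S) \<and> f = (\<lambda>x. \<Sum>i<n. c i * g i x)}"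

text \<open>Weak*-closure in X^*: f lies in it iff every basic weak* neighbourhood
{g. \<forall>x\<in>F. |f x - g x| < e} (F finite, e > 0) meets S.\<close>
definition wstar_closure :: "('a::complex_banach \<Rightarrow> complex) set \<Rightarrow> ('a \<Rightarrow> complex) set" where
  "wstar_closure S = {f\<in>cdual. \<forall>F e. finite F \<and> e > 0 \<longrightarrow>
       (\<exists>g\<in>S. \<forall>x\<in>F. cmod (f x - g x) < e)}"

end

theory Submission
  imports Defs
begin

text \<open>Every \<open>N\<close> with \<open>E \<subset> N\<^sub>+\<close> contains \<open>E\<close>, which gives one inclusion. For the other,
a functional \<open>f \<in> E\<^sup>\<bottom>\<close> only has to be matched on a finite set \<open>F\<close>. If \<open>E \<subset> E\<^sub>+\<close>,
\<open>f\<close> is itself a generator. Otherwise \<open>E\<close> is the intersection of the chain of strictly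
larger members of the nest, and adjoining the finitely many vectors of \<open>F\<close> commutes with
this intersection; so, by induction over \<open>F\<close> and Hahn-Banach separation, some \<open>N \<supset> E\<close>
carries a \<open>g \<in> N\<^sup>\<bottom>\<close> that agrees with \<open>f\<close> on \<open>F\<close>.\<close>

section \<open>Hahn-Banach for norm-dominated functionals\<close>

text \<open>Partial real functionals dominated by the norm are encoded by their graphs, so that
Zorn's lemma can be applied to set inclusion.\<close>

definition norm_dominated_graph :: "('a::real_normed_vector \<times> real) set \<Rightarrow> bool" where
  "norm_dominated_graph G \<longleftrightarrow> (0, 0) \<in> G \<and>
    (\<forall>x a y b. (x, a) \<in> G \<longrightarrow> (y, b) \<in> G \<longrightarrow> (x + y, a + b) \<in> G) \<and>
    (\<forall>x a t. (x, a) \<in> G \<longrightarrow> (t *\<^sub>R x, t * a) \<in> G) \<and>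
    (\<forall>x a b. (x, a) \<in> G \<longrightarrow> (x, b) \<in> G \<longrightarrow> a = b) \<and>
    (\<forall>x a. (x, a) \<in> G \<longrightarrow> a \<le> norm x)"

lemma norm_dominated_graphD:
  assumes "norm_dominated_graph G"
  shows "(0, 0) \<in> G"
    and "(x, a) \<in> G \<Longrightarrow> (y, b) \<in> G \<Longrightarrow> (x + y, a + b) \<in> G"
    and "(x, a) \<in> G \<Longrightarrow> (t *\<^sub>R x, t * a) \<in> G"
    and "(x, a) \<in> G \<Longrightarrow> (x, b) \<in> G \<Longrightarrow> a = b"
    and "(x, a) \<in> G \<Longrightarrow> a \<le> norm x"
  using assms unfolding norm_dominated_graph_def by blast+

lemma norm_dominated_graph_Union_chain:
  assumes C: "C \<in> chains {G. norm_dominated_graph G}" and "C \<noteq> {}"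
  shows "norm_dominated_graph (\<Union>C)"
proof -
  have graph: "norm_dominated_graph G" if "G \<in> C" for G
    using chainsD2[OF C] that by blast
  have common: "\<exists>G\<in>C. p \<in> G \<and> q \<in> G" if "p \<in> \<Union>C" "q \<in> \<Union>C" for p q
    using that chainsD[OF C] by blast
  obtain G1 where "G1 \<in> C" using \<open>C \<noteq> {}\<close> by blast
  show ?thesis
    unfolding norm_dominated_graph_def
  proof (intro conjI allI impI)
    show "(0, 0) \<in> \<Union>C"
      using \<open>G1 \<in> C\<close> norm_dominated_graphD(1)[OF graph] by blast
  next
    fix x a y b assume "(x, a) \<in> \<Union>C" "(y, b) \<in> \<Union>C"
    then show "(x + y, a + b) \<in> \<Union>C"
      using common norm_dominated_graphD(2)[OF graph] by blast
  next
    fix x a t assume "(x, a) \<in> \<Union>C"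
    then show "(t *\<^sub>R x, t * a) \<in> \<Union>C"
      using norm_dominated_graphD(3)[OF graph] by blast
  next
    fix x a b assume "(x, a) \<in> \<Union>C" "(x, b) \<in> \<Union>C"
    then obtain G where "G \<in> C" "(x, a) \<in> G" "(x, b) \<in> G"
      using common by blast
    then show "a = b"
      using norm_dominated_graphD(4)[OF graph] by blast
  next
    fix x a assume "(x, a) \<in> \<Union>C"
    then show "a \<le> norm x"
      using norm_dominated_graphD(5)[OF graph] by blast
  qed
qed

text \<open>The two bounds are compatible since \<open>a + b \<le> norm (u + v) \<le> norm (u - z) + norm (v + z)\<close>;
any \<open>c\<close> between them is an admissible value at \<open>z\<close>.\<close>

lemma norm_dominated_graph_gap:
  assumes G: "norm_dominated_graph G"
  obtains c where "\<And>u a. (u, a) \<in> G \<Longrightarrow> a - norm (u - z) \<le> c"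
    and "\<And>v b. (v, b) \<in> G \<Longrightarrow> c \<le> norm (v + z) - b"
proof -
  define L where "L = {a - norm (u - z) | u a. (u, a) \<in> G}"
  have below: "a - norm (u - z) \<le> norm (v + z) - b" if "(u, a) \<in> G" "(v, b) \<in> G" for u a v b
  proof -
    have "a + b \<le> norm (u + v)"
      using norm_dominated_graphD(5)[OF G norm_dominated_graphD(2)[OF G that]] .
    also have "\<dots> \<le> norm (u - z) + norm (v + z)"
      using norm_triangle_ineq[of "u - z" "v + z"] by simp
    finally show ?thesis by simp
  qed
  have "L \<noteq> {}"
    using norm_dominated_graphD(1)[OF G] unfolding L_def by blast
  moreover have "bdd_above L"
    using below[OF _ norm_dominated_graphD(1)[OF G]] unfolding L_def bdd_above_def by auto
  ultimately show ?thesis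
    using below by (intro that[of "Sup L"] cSup_upper cSup_least) (auto simp: L_def)
qed

lemma norm_dominated_value_bound:
  assumes G: "norm_dominated_graph G" and "(x, a) \<in> G"
    and lower: "\<And>u a. (u, a) \<in> G \<Longrightarrow> a - norm (u - z) \<le> c"
    and upper: "\<And>v b. (v, b) \<in> G \<Longrightarrow> c \<le> norm (v + z) - b"
  shows "a + t * c \<le> norm (x + t *\<^sub>R z)"
proof (cases t "0::real" rule: linorder_cases)
  case less
  have "(-1 / t) * a - norm ((-1 / t) *\<^sub>R x - z) \<le> c"
    using lower norm_dominated_graphD(3)[OF G \<open>(x, a) \<in> G\<close>] by blast
  then have "(- t) * ((-1 / t) * a - norm ((-1 / t) *\<^sub>R x - z)) \<le> (- t) * c"
    using less by (intro mult_left_mono) auto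
  moreover have "(- t) * norm ((-1 / t) *\<^sub>R x - z) = norm (x + t *\<^sub>R z)"
  proof -
    have "(- t) *\<^sub>R ((-1 / t) *\<^sub>R x - z) = x + t *\<^sub>R z"
      using less by (simp add: algebra_simps)
    moreover have "norm ((- t) *\<^sub>R ((-1 / t) *\<^sub>R x - z)) = (- t) * norm ((-1 / t) *\<^sub>R x - z)"
      using less by simp
    ultimately show ?thesis
      by simp
  qed
  ultimately show ?thesis
    using less by (simp add: algebra_simps)
next
  case equal
  then show ?thesis using norm_dominated_graphD(5)[OF G \<open>(x, a) \<in> G\<close>] by simp
next
  case greater
  have "c \<le> norm ((1 / t) *\<^sub>R x + z) - (1 / t) * a"
    using upper norm_dominated_graphD(3)[OF G \<open>(x, a) \<in> G\<close>] by blast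
  then have "t * c \<le> t * norm ((1 / t) *\<^sub>R x + z) - a"
    using greater by (simp add: field_simps)
  also have "t * norm ((1 / t) *\<^sub>R x + z) = norm (x + t *\<^sub>R z)"
  proof -
    have "t *\<^sub>R ((1 / t) *\<^sub>R x + z) = x + t *\<^sub>R z"
      using greater by (simp add: scaleR_add_right)
    moreover have "norm (t *\<^sub>R ((1 / t) *\<^sub>R x + z)) = t * norm ((1 / t) *\<^sub>R x + z)"
      using greater by simp
    ultimately show ?thesis
      by simp
  qed
  finally show ?thesis by simp
qed

lemma norm_dominated_graph_extend:
  assumes G: "norm_dominated_graph G" and z: "\<forall>a. (z, a) \<notin> G"
  shows "\<exists>G'. norm_dominated_graph G' \<and> G \<subset> G'"
proof -
  obtain c where lower: "\<And>u a. (u, a) \<in> G \<Longrightarrow> a - norm (u - z) \<le> c"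
    and upper: "\<And>v b. (v, b) \<in> G \<Longrightarrow> c \<le> norm (v + z) - b"
    using norm_dominated_graph_gap[OF G] by blast
  define G' where "G' = {(x + t *\<^sub>R z, a + t * c) | x a t. (x, a) \<in> G}"
  have unique: "t = s \<and> x = y"
    if "(x, a) \<in> G" "(y, b) \<in> G" "x + t *\<^sub>R z = y + s *\<^sub>R z" for x a y b t s
  proof (rule ccontr)
    assume "\<not> (t = s \<and> x = y)"
    with that(3) have "t \<noteq> s" by auto
    from that(3) have "(s - t) *\<^sub>R z = x - y"
      by (simp add: algebra_simps)
    then have "(1 / (s - t)) *\<^sub>R ((s - t) *\<^sub>R z) = (1 / (s - t)) *\<^sub>R (x - y)"
      by simp
    then have "z = (1 / (s - t)) *\<^sub>R (x - y)"
      using \<open>t \<noteq> s\<close> by simp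
    moreover have "(x - y, a - b) \<in> G"
      using norm_dominated_graphD(2)[OF G that(1) norm_dominated_graphD(3)[OF G that(2), of "-1"]]
      by simp
    ultimately have "(z, (1 / (s - t)) * (a - b)) \<in> G"
      using norm_dominated_graphD(3)[OF G] by metis
    with z show False by blast
  qed
  have "norm_dominated_graph G'"
    unfolding norm_dominated_graph_def
  proof (intro conjI allI impI)
    show "(0, 0) \<in> G'"
      unfolding G'_def using norm_dominated_graphD(1)[OF G] by force
  next
    fix x a y b assume "(x, a) \<in> G'" "(y, b) \<in> G'"
    then obtain x1 a1 t1 x2 a2 t2 where "(x1, a1) \<in> G" "(x2, a2) \<in> G"
      "x = x1 + t1 *\<^sub>R z" "a = a1 + t1 * c" "y = x2 + t2 *\<^sub>R z" "b = a2 + t2 * c"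
      unfolding G'_def by blast
    moreover have "x + y = (x1 + x2) + (t1 + t2) *\<^sub>R z" "a + b = (a1 + a2) + (t1 + t2) * c"
      using calculation(3-6) by (simp_all add: algebra_simps)
    ultimately show "(x + y, a + b) \<in> G'"
      unfolding G'_def using norm_dominated_graphD(2)[OF G] by blast
  next
    fix x a t assume "(x, a) \<in> G'"
    then obtain x1 a1 t1 where "(x1, a1) \<in> G" "x = x1 + t1 *\<^sub>R z" "a = a1 + t1 * c"
      unfolding G'_def by blast
    moreover have "t *\<^sub>R x = t *\<^sub>R x1 + (t * t1) *\<^sub>R z" "t * a = t * a1 + (t * t1) * c"
      using \<open>x = x1 + t1 *\<^sub>R z\<close> \<open>a = a1 + t1 * c\<close> by (simp_all add: algebra_simps)
    ultimately show "(t *\<^sub>R x, t * a) \<in> G'"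
      unfolding G'_def using norm_dominated_graphD(3)[OF G] by blast
  next
    fix x a b assume "(x, a) \<in> G'" "(x, b) \<in> G'"
    then obtain x1 a1 t1 x2 a2 t2 where x: "(x1, a1) \<in> G" "(x2, a2) \<in> G"
      "x = x1 + t1 *\<^sub>R z" "a = a1 + t1 * c" "x = x2 + t2 *\<^sub>R z" "b = a2 + t2 * c"
      unfolding G'_def by blast
    have "x1 + t1 *\<^sub>R z = x2 + t2 *\<^sub>R z"
      using x(3,5) by simp
    then have "t1 = t2 \<and> x1 = x2"
      using unique[OF x(1,2)] by blast
    then show "a = b"
      using x norm_dominated_graphD(4)[OF G] by auto
  next
    fix x a assume "(x, a) \<in> G'"
    then obtain x1 a1 t where "(x1, a1) \<in> G" "x = x1 + t *\<^sub>R z" "a = a1 + t * c"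
      unfolding G'_def by blast
    then show "a \<le> norm x"
      using norm_dominated_value_bound[OF G _ lower upper] by blast
  qed
  moreover have "G \<subseteq> G'"
    unfolding G'_def by force
  moreover have "(z, c) \<in> G'"
    unfolding G'_def using norm_dominated_graphD(1)[OF G]
    by (intro CollectI exI[of _ 0] exI[of _ 0] exI[of _ 1]) auto
  ultimately show ?thesis
    using z by blast
qed

theorem hahn_banach_norm_dominated:
  assumes "norm_dominated_graph G0"
  obtains \<psi> where "linear \<psi>" "\<And>x a. (x, a) \<in> G0 \<Longrightarrow> \<psi> x = a" "\<And>x. \<bar>\<psi> x\<bar> \<le> norm x"
proof -
  let ?A = "{G. norm_dominated_graph G \<and> G0 \<subseteq> G}"
  have "\<forall>C\<in>chains ?A. \<exists>U\<in>?A. \<forall>X\<in>C. X \<subseteq> U"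
  proof
    fix C assume C: "C \<in> chains ?A"
    show "\<exists>U\<in>?A. \<forall>X\<in>C. X \<subseteq> U"
    proof (cases "C = {}")
      case True
      then show ?thesis using assms by blast
    next
      case False
      have "C \<in> chains {G. norm_dominated_graph G}"
        using C by (auto simp: chains_def chain_subset_def)
      then have "norm_dominated_graph (\<Union>C)"
        using False by (rule norm_dominated_graph_Union_chain)
      moreover have "G0 \<subseteq> \<Union>C"
        using False chainsD2[OF C] by blast
      ultimately show ?thesis
        by blast
    qed
  qed
  from Zorn_Lemma2[OF this] obtain M where "M \<in> ?A" and maximal: "\<forall>X\<in>?A. M \<subseteq> X \<longrightarrow> X = M"
    by blast
  then have M: "norm_dominated_graph M" and "G0 \<subseteq> M" by blast+
  have total: "\<exists>a. (x, a) \<in> M" for x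
  proof (rule ccontr)
    assume "\<nexists>a. (x, a) \<in> M"
    then obtain G where "norm_dominated_graph G" "M \<subset> G"
      using norm_dominated_graph_extend[OF M] by blast
    moreover from this have "G0 \<subseteq> G"
      using \<open>G0 \<subseteq> M\<close> by blast
    ultimately have "G = M"
      using maximal by blast
    with \<open>M \<subset> G\<close> show False
      by blast
  qed
  define \<psi> where "\<psi> x = (THE a. (x, a) \<in> M)" for x
  have graph: "(x, \<psi> x) \<in> M" for x
  proof -
    obtain a where a: "(x, a) \<in> M"
      using total by blast
    have "(THE a. (x, a) \<in> M) = a"
      by (rule the_equality) (auto intro: a dest: norm_dominated_graphD(4)[OF M a])
    with a show ?thesis
      unfolding \<psi>_def by simp
  qed
  have \<psi>_eq: "\<psi> x = a" if "(x, a) \<in> M" for x a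
    using norm_dominated_graphD(4)[OF M graph that] .
  have "linear \<psi>"
  proof (rule linearI)
    show "\<psi> (x + y) = \<psi> x + \<psi> y" for x y
      using \<psi>_eq[OF norm_dominated_graphD(2)[OF M graph graph]] .
    show "\<psi> (t *\<^sub>R x) = t *\<^sub>R \<psi> x" for t x
      using \<psi>_eq[OF norm_dominated_graphD(3)[OF M graph]] by simp
  qed
  moreover have "\<bar>\<psi> x\<bar> \<le> norm x" for x
    using norm_dominated_graphD(5)[OF M graph, of x] norm_dominated_graphD(5)[OF M graph, of "- x"]
      linear_neg[OF \<open>linear \<psi>\<close>, of x] by auto
  ultimately show ?thesis
    using that \<psi>_eq \<open>G0 \<subseteq> M\<close> by (meson subsetD)
qed

section \<open>Complex subspaces and bounded functionals\<close>

lemma cscale_zero_left [simp]: "(0::complex) *\<^sub>C (x::'a::complex_banach) = 0"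
  using cscale_add_left[of 0 0 x] by simp

lemma cscale_zero_right [simp]: "c *\<^sub>C (0::'a::complex_banach) = 0"
  using cscale_add_right[of c 0 0] by simp

lemma cscale_minus_left: "(- c) *\<^sub>C (x::'a::complex_banach) = - (c *\<^sub>C x)"
  using cscale_add_left[of "- c" c x] by (simp add: eq_neg_iff_add_eq_0)

lemma cscale_minus_right: "c *\<^sub>C (- x::'a::complex_banach) = - (c *\<^sub>C x)"
  using cscale_add_right[of c "- x" x] by (simp add: eq_neg_iff_add_eq_0)

lemma cscale_diff_left: "(a - b) *\<^sub>C (x::'a::complex_banach) = a *\<^sub>C x - b *\<^sub>C x"
  using cscale_add_left[of a "- b" x] by (simp add: cscale_minus_left)

lemma cscale_diff_right: "c *\<^sub>C (x - y::'a::complex_banach) = c *\<^sub>C x - c *\<^sub>C y"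
  using cscale_add_right[of c x "- y"] by (simp add: cscale_minus_right)

lemma cscale_minus_one [simp]: "(-1) *\<^sub>C (x::'a::complex_banach) = - x"
  using cscale_minus_left[of 1 x] by (simp add: cscale_one)

definition csubspace :: "'a::complex_banach set \<Rightarrow> bool" where
  "csubspace M \<longleftrightarrow> 0 \<in> M \<and> (\<forall>x\<in>M. \<forall>y\<in>M. x + y \<in> M) \<and> (\<forall>c. \<forall>x\<in>M. c *\<^sub>C x \<in> M)"

lemma closed_csubspace_iff: "closed_csubspace M \<longleftrightarrow> closed M \<and> csubspace M"
  unfolding closed_csubspace_def csubspace_def by blast

lemma csubspace_0: "csubspace M \<Longrightarrow> 0 \<in> M"
  and csubspace_add: "csubspace M \<Longrightarrow> x \<in> M \<Longrightarrow> y \<in> M \<Longrightarrow> x + y \<in> M"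
  and csubspace_cscale: "csubspace M \<Longrightarrow> x \<in> M \<Longrightarrow> c *\<^sub>C x \<in> M"
  unfolding csubspace_def by blast+

lemma csubspace_diff: "csubspace M \<Longrightarrow> x \<in> M \<Longrightarrow> y \<in> M \<Longrightarrow> x - y \<in> M"
  using csubspace_add[of M x "- y"] csubspace_cscale[of M y "-1"] by simp

lemma csubspace_imp_subspace: "csubspace M \<Longrightarrow> subspace M"
  unfolding subspace_def by (simp add: csubspace_0 csubspace_add csubspace_cscale scaleR_cscale)

lemma csubspace_Inter: "(\<And>M. M \<in> \<M> \<Longrightarrow> csubspace M) \<Longrightarrow> csubspace (\<Inter>\<M>)"
  unfolding csubspace_def by blast

lemma cscale_mem_csubspace_iff:
  assumes "csubspace M" "y \<notin> M"
  shows "c *\<^sub>C y \<in> M \<longleftrightarrow> c = 0"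
proof
  assume "c *\<^sub>C y \<in> M"
  then have "inverse c *\<^sub>C (c *\<^sub>C y) \<in> M"
    using csubspace_cscale[OF assms(1)] by blast
  then show "c = 0"
    using assms(2) by (cases "c = 0") (simp_all add: cscale_cscale cscale_one)
qed (simp add: csubspace_0[OF assms(1)])

lemma cdual_add: "f \<in> cdual \<Longrightarrow> f (x + y) = f x + f y"
  and cdual_cscale: "f \<in> cdual \<Longrightarrow> f (c *\<^sub>C x) = c * f x"
  and cdual_bounded: "f \<in> cdual \<Longrightarrow> \<exists>K. \<forall>x. cmod (f x) \<le> K * norm x"
  unfolding cdual_def by blast+

lemma cdual_0 [simp]: "f \<in> cdual \<Longrightarrow> f 0 = 0"
  using cdual_cscale[of f 0 0] by simp

lemma cdual_diff: "f \<in> cdual \<Longrightarrow> f (x - y) = f x - f y"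
  using cdual_add[of f "x - y" y] by simp

lemma cdual_plus: assumes "f \<in> cdual" "g \<in> cdual" shows "(\<lambda>x. f x + g x) \<in> cdual"
proof -
  obtain K1 K2 where "\<forall>x. cmod (f x) \<le> K1 * norm x" "\<forall>x. cmod (g x) \<le> K2 * norm x"
    using cdual_bounded[OF assms(1)] cdual_bounded[OF assms(2)] by blast
  then have "cmod (f x + g x) \<le> (K1 + K2) * norm x" for x
    using norm_triangle_ineq[of "f x" "g x"] by (smt (verit) distrib_right)
  then have "\<exists>K. \<forall>x. cmod (f x + g x) \<le> K * norm x"
    by blast
  then show ?thesis
    using assms unfolding cdual_def by (auto simp: algebra_simps)
qed

lemma cdual_mult: assumes "f \<in> cdual" shows "(\<lambda>x. c * f x) \<in> cdual"
proof -
  obtain K where "\<forall>x. cmod (f x) \<le> K * norm x"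
    using cdual_bounded[OF assms] by blast
  then have "cmod (c * f x) \<le> (cmod c * K) * norm x" for x
    using mult_left_mono[of "cmod (f x)" "K * norm x" "cmod c"] by (simp add: norm_mult mult.assoc)
  then have "\<exists>K. \<forall>x. cmod (c * f x) \<le> K * norm x"
    by blast
  then show ?thesis
    using assms unfolding cdual_def by (auto simp: algebra_simps)
qed

lemma cdual_minus: "f \<in> cdual \<Longrightarrow> g \<in> cdual \<Longrightarrow> (\<lambda>x. f x - g x) \<in> cdual"
  using cdual_plus[of f "\<lambda>x. -1 * g x"] cdual_mult[of g "-1"] by simp

lemma cdual_zero: "(\<lambda>x. 0) \<in> cdual"
  unfolding cdual_def by (auto intro: exI[of _ 0])

lemma csubspace_kernel: "f \<in> cdual \<Longrightarrow> csubspace {x. f x = 0}"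
  unfolding csubspace_def by (simp add: cdual_add cdual_cscale)

lemma norm_dominated_graph_line:
  fixes W :: "'a::real_normed_vector set"
  assumes W: "subspace W" and "d > 0" and far: "\<And>w. w \<in> W \<Longrightarrow> d \<le> norm (x - w)"
  shows "norm_dominated_graph {(w + t *\<^sub>R x, t * d) | w t. w \<in> W}" (is "norm_dominated_graph ?G")
  unfolding norm_dominated_graph_def
proof (intro conjI allI impI)
  show "(0, 0) \<in> ?G"
    using subspace_0[OF W] by force
next
  fix y a z b assume "(y, a) \<in> ?G" "(z, b) \<in> ?G"
  then obtain w1 t1 w2 t2 where "w1 \<in> W" "w2 \<in> W" "y = w1 + t1 *\<^sub>R x" "a = t1 * d"
    "z = w2 + t2 *\<^sub>R x" "b = t2 * d" by blast
  moreover have "y + z = (w1 + w2) + (t1 + t2) *\<^sub>R x" "a + b = (t1 + t2) * d"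
    using calculation(3-6) by (simp_all add: algebra_simps)
  ultimately show "(y + z, a + b) \<in> ?G"
    using subspace_add[OF W] by blast
next
  fix y a t assume "(y, a) \<in> ?G"
  then obtain w1 t1 where "w1 \<in> W" "y = w1 + t1 *\<^sub>R x" "a = t1 * d" by blast
  moreover have "t *\<^sub>R y = t *\<^sub>R w1 + (t * t1) *\<^sub>R x" "t * a = (t * t1) * d"
    using calculation(2,3) by (simp_all add: algebra_simps)
  ultimately show "(t *\<^sub>R y, t * a) \<in> ?G"
    using subspace_scale[OF W] by blast
next
  fix y a b assume "(y, a) \<in> ?G" "(y, b) \<in> ?G"
  then obtain w1 t1 w2 t2 where y: "w1 \<in> W" "w2 \<in> W" "y = w1 + t1 *\<^sub>R x" "a = t1 * d"
    "y = w2 + t2 *\<^sub>R x" "b = t2 * d" by blast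
  have "t1 = t2"
  proof (rule ccontr)
    assume "t1 \<noteq> t2"
    have "(t1 - t2) *\<^sub>R x = w2 - w1"
      using y by (simp add: algebra_simps)
    then have "(1 / (t1 - t2)) *\<^sub>R ((t1 - t2) *\<^sub>R x) = (1 / (t1 - t2)) *\<^sub>R (w2 - w1)"
      by simp
    then have "x = (1 / (t1 - t2)) *\<^sub>R (w2 - w1)"
      using \<open>t1 \<noteq> t2\<close> by simp
    then have "x \<in> W"
      using subspace_scale[OF W subspace_diff[OF W y(2,1)]] by simp
    then show False
      using far[of x] \<open>d > 0\<close> by simp
  qed
  then show "a = b"
    using y by simp
next
  fix y a assume "(y, a) \<in> ?G"
  then obtain w t where y: "w \<in> W" "y = w + t *\<^sub>R x" "a = t * d" by blast
  show "a \<le> norm y"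
  proof (cases "t > 0")
    case False
    then have "t * d \<le> 0"
      using \<open>d > 0\<close> by (simp add: mult_nonpos_nonneg)
    then show ?thesis
      using y norm_ge_zero[of y] by linarith
  next
    case True
    have "- ((1 / t) *\<^sub>R w) \<in> W"
      using subspace_neg[OF W] subspace_scale[OF W] y(1) by blast
    from far[OF this] have "t * d \<le> t * norm (x + (1 / t) *\<^sub>R w)"
      using True by simp
    also have "\<dots> = norm (t *\<^sub>R (x + (1 / t) *\<^sub>R w))"
      using True by simp
    also have "t *\<^sub>R (x + (1 / t) *\<^sub>R w) = y"
      using True y by (simp add: algebra_simps)
    finally show ?thesis
      using y by simp
  qed
qed

lemma real_functional_separating:
  fixes W :: "'a::real_normed_vector set"
  assumes W: "subspace W" "closed W" and "x \<notin> W"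
  obtains \<psi> where "linear \<psi>" "\<And>y. \<bar>\<psi> y\<bar> \<le> norm y" "\<And>w. w \<in> W \<Longrightarrow> \<psi> w = 0" "\<psi> x \<noteq> 0"
proof -
  have "open (- W)"
    using W(2) by (simp add: open_Compl)
  then obtain d where "d > 0" and ball: "ball x d \<subseteq> - W"
    using \<open>x \<notin> W\<close> open_contains_ball by blast
  have far: "d \<le> norm (x - w)" if "w \<in> W" for w
    using ball that by (force simp: dist_norm subset_iff)
  define G where "G = {(w + t *\<^sub>R x, t * d) | w t. w \<in> W}"
  have "norm_dominated_graph G"
    unfolding G_def using W(1) \<open>d > 0\<close> far by (rule norm_dominated_graph_line)
  then obtain \<psi> where "linear \<psi>" and on_graph: "\<And>y a. (y, a) \<in> G \<Longrightarrow> \<psi> y = a"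
    and "\<And>y. \<bar>\<psi> y\<bar> \<le> norm y"
    by (rule hahn_banach_norm_dominated) blast
  have "(w + 0 *\<^sub>R x, 0 * d) \<in> G" if "w \<in> W" for w
    unfolding G_def using that by blast
  then have "\<psi> w = 0" if "w \<in> W" for w
    using on_graph that by fastforce
  moreover have "(0 + 1 *\<^sub>R x, 1 * d) \<in> G"
    unfolding G_def using subspace_0[OF W(1)] by blast
  then have "\<psi> x = d"
    using on_graph by fastforce
  ultimately show ?thesis
    using that \<open>linear \<psi>\<close> \<open>\<And>y. \<bar>\<psi> y\<bar> \<le> norm y\<close> \<open>d > 0\<close> by simp
qed

text \<open>A real functional \<open>\<psi>\<close> is the real part of the unique complex-linear functional
\<open>y \<mapsto> \<psi> y - \<i> \<psi> (\<i> y)\<close>.\<close>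

definition complexify :: "('a::complex_banach \<Rightarrow> real) \<Rightarrow> 'a \<Rightarrow> complex" where
  "complexify \<psi> y = Complex (\<psi> y) (- \<psi> (\<i> *\<^sub>C y))"

lemma complexify_in_cdual:
  assumes \<psi>: "linear \<psi>" and bound: "\<And>y. \<bar>\<psi> y\<bar> \<le> norm y"
  shows "complexify \<psi> \<in> cdual"
  unfolding cdual_def
proof (intro CollectI conjI allI exI)
  fix y z :: 'a
  show "complexify \<psi> (y + z) = complexify \<psi> y + complexify \<psi> z"
    by (simp add: complexify_def cscale_add_right linear_add[OF \<psi>] complex_eq_iff)
next
  fix c and y :: 'a
  have c: "c = complex_of_real (Re c) + complex_of_real (Im c) * \<i>"
    by (simp add: complex_eq_iff)
  have cy: "c *\<^sub>C y = Re c *\<^sub>R y + Im c *\<^sub>R (\<i> *\<^sub>C y)"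
    by (subst c) (simp add: cscale_add_left cscale_cscale scaleR_cscale)
  have "\<i> *\<^sub>C (\<i> *\<^sub>C y) = - y"
    by (simp add: cscale_cscale)
  then have icy: "\<i> *\<^sub>C (c *\<^sub>C y) = Re c *\<^sub>R (\<i> *\<^sub>C y) - Im c *\<^sub>R y"
    unfolding cy by (simp add: cscale_add_right scaleR_cscale cscale_cscale mult.commute
        cscale_minus_right cscale_minus_left)
  show "complexify \<psi> (c *\<^sub>C y) = c * complexify \<psi> y"
    unfolding complexify_def icy unfolding cy
    by (simp add: linear_add[OF \<psi>] linear_diff[OF \<psi>] linear_scale[OF \<psi>] complex_eq_iff algebra_simps)
next
  fix y :: 'a
  have "cmod (complexify \<psi> y) \<le> \<bar>\<psi> y\<bar> + \<bar>\<psi> (\<i> *\<^sub>C y)\<bar>"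
    using cmod_le[of "complexify \<psi> y"] by (simp add: complexify_def)
  also have "\<dots> \<le> norm y + norm (\<i> *\<^sub>C y)"
    using bound by (intro add_mono)
  also have "\<dots> = 2 * norm y"
    by (simp add: norm_cscale)
  finally show "cmod (complexify \<psi> y) \<le> 2 * norm y" .
qed

lemma cdual_separating:
  assumes W: "csubspace W" "closed W" and "x \<notin> W"
  obtains h where "h \<in> annih W" "h x = 1"
proof -
  obtain \<psi> where \<psi>: "linear \<psi>" "\<And>y. \<bar>\<psi> y\<bar> \<le> norm y"
    and vanish: "\<And>w. w \<in> W \<Longrightarrow> \<psi> w = 0" and "\<psi> x \<noteq> 0"
    using real_functional_separating[OF csubspace_imp_subspace[OF W(1)] W(2) \<open>x \<notin> W\<close>] by blast
  define h where "h y = inverse (complexify \<psi> x) * complexify \<psi> y" for y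
  have "complexify \<psi> x \<noteq> 0"
    using \<open>\<psi> x \<noteq> 0\<close> by (simp add: complexify_def complex_eq_iff)
  then have "h x = 1"
    by (simp add: h_def)
  moreover have "h \<in> cdual"
    unfolding h_def by (rule cdual_mult[OF complexify_in_cdual[OF \<psi>]])
  moreover have "h w = 0" if "w \<in> W" for w
    using vanish[OF that] vanish[OF csubspace_cscale[OF W(1) that]]
    by (simp add: h_def complexify_def complex_eq_iff)
  ultimately show ?thesis
    using that unfolding annih_def by blast
qed

section \<open>Complex spans and chains of subspaces\<close>

definition cspan :: "'a::complex_banach set \<Rightarrow> 'a set" where
  "cspan S = \<Inter>{M. csubspace M \<and> S \<subseteq> M}"

lemma csubspace_cspan: "csubspace (cspan S)"
  unfolding cspan_def by (rule csubspace_Inter) blast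

lemma cspan_superset: "S \<subseteq> cspan S"
  unfolding cspan_def by blast

lemma cspan_minimal: "S \<subseteq> M \<Longrightarrow> csubspace M \<Longrightarrow> cspan S \<subseteq> M"
  unfolding cspan_def by blast

lemma cspan_mono: "S \<subseteq> T \<Longrightarrow> cspan S \<subseteq> cspan T"
  unfolding cspan_def by blast

lemma cspan_csubspace: "csubspace S \<Longrightarrow> cspan S = S"
  using cspan_minimal cspan_superset by blast

lemma cspan_insert: "cspan (insert a S) = {x. \<exists>k. x - k *\<^sub>C a \<in> cspan S}" (is "_ = ?T")
proof
  have "csubspace ?T"
    unfolding csubspace_def
  proof (intro conjI ballI allI)
    show "0 \<in> ?T"
      by (intro CollectI exI[of _ 0]) (simp add: csubspace_0[OF csubspace_cspan])
  next
    fix x y assume "x \<in> ?T" "y \<in> ?T"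
    then obtain k l where "x - k *\<^sub>C a \<in> cspan S" "y - l *\<^sub>C a \<in> cspan S"
      by blast
    moreover have "(x + y) - (k + l) *\<^sub>C a = (x - k *\<^sub>C a) + (y - l *\<^sub>C a)"
      by (simp add: cscale_add_left algebra_simps)
    ultimately show "x + y \<in> ?T"
      using csubspace_add[OF csubspace_cspan] by (metis (mono_tags) mem_Collect_eq)
  next
    fix c x assume "x \<in> ?T"
    then obtain k where "x - k *\<^sub>C a \<in> cspan S"
      by blast
    moreover have "c *\<^sub>C x - (c * k) *\<^sub>C a = c *\<^sub>C (x - k *\<^sub>C a)"
      by (simp add: cscale_diff_right cscale_cscale)
    ultimately show "c *\<^sub>C x \<in> ?T"
      using csubspace_cscale[OF csubspace_cspan] by (metis (mono_tags) mem_Collect_eq)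
  qed
  moreover have "insert a S \<subseteq> ?T"
  proof -
    have "a - 1 *\<^sub>C a \<in> cspan S"
      using csubspace_0[OF csubspace_cspan] by (simp add: cscale_one)
    moreover have "s - 0 *\<^sub>C a \<in> cspan S" if "s \<in> S" for s
      using cspan_superset that by auto
    ultimately show ?thesis
      by blast
  qed
  ultimately show "cspan (insert a S) \<subseteq> ?T"
    by (rule cspan_minimal[rotated])
next
  show "?T \<subseteq> cspan (insert a S)"
  proof
    fix x assume "x \<in> ?T"
    then obtain k where "x - k *\<^sub>C a \<in> cspan (insert a S)"
      using cspan_mono[of S "insert a S"] by blast
    moreover have "k *\<^sub>C a \<in> cspan (insert a S)"
      using csubspace_cscale[OF csubspace_cspan] cspan_superset by blast
    ultimately show "x \<in> cspan (insert a S)"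
      using csubspace_add[OF csubspace_cspan] by fastforce
  qed
qed

lemma bounded_linear_diff_cdual_cscale:
  assumes "h \<in> cdual"
  shows "bounded_linear (\<lambda>x. x - h x *\<^sub>C a)"
proof -
  obtain K where K: "\<And>x. cmod (h x) \<le> K * norm x"
    using cdual_bounded[OF assms] by blast
  have "norm (x - h x *\<^sub>C a) \<le> norm x * (1 + \<bar>K\<bar> * norm a)" for x
  proof -
    have "norm (x - h x *\<^sub>C a) \<le> norm x + cmod (h x) * norm a"
      using norm_triangle_ineq4[of x "h x *\<^sub>C a"] by (simp add: norm_cscale)
    also have "cmod (h x) * norm a \<le> (\<bar>K\<bar> * norm x) * norm a"
      using order_trans[OF K[of x] mult_right_mono[OF abs_ge_self norm_ge_zero]]
      by (rule mult_right_mono) simp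
    finally show ?thesis
      by (simp add: algebra_simps)
  qed
  then show ?thesis
    using assms
    by (intro bounded_linear_intro[of _ "1 + \<bar>K\<bar> * norm a"])
      (simp_all add: cdual_add cdual_cscale cscale_add_left cscale_diff_right
        scaleR_cscale cscale_cscale)
qed

lemma closed_cspan_insert:
  assumes "closed (cspan S)"
  shows "closed (cspan (insert a S))"
proof (cases "a \<in> cspan S")
  case True
  have "x - k *\<^sub>C a \<in> cspan S \<longleftrightarrow> x \<in> cspan S" for x k
  proof
    assume "x - k *\<^sub>C a \<in> cspan S"
    then have "(x - k *\<^sub>C a) + k *\<^sub>C a \<in> cspan S"
      using csubspace_add[OF csubspace_cspan] csubspace_cscale[OF csubspace_cspan True] by blast
    then show "x \<in> cspan S"
      by simp
  qed (use csubspace_diff[OF csubspace_cspan] csubspace_cscale[OF csubspace_cspan True] in blast)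
  then show ?thesis
    using assms by (simp add: cspan_insert)
next
  case False
  obtain h where h: "h \<in> annih (cspan S)" "h a = 1"
    using cdual_separating[OF csubspace_cspan assms False] by blast
  then have "h \<in> cdual"
    by (simp add: annih_def)
  text \<open>The coefficient of \<open>a\<close> is read off by \<open>h\<close>, which exhibits the span as a closed preimage.\<close>
  have "cspan (insert a S) = (\<lambda>x. x - h x *\<^sub>C a) -` cspan S"
  proof (intro set_eqI iffI)
    fix x assume "x \<in> cspan (insert a S)"
    then obtain k where k: "x - k *\<^sub>C a \<in> cspan S"
      by (auto simp: cspan_insert)
    then have "h (x - k *\<^sub>C a) = 0"
      using h(1) by (simp add: annih_def)
    then have "h x = k"
      using h(2) \<open>h \<in> cdual\<close> by (simp add: cdual_diff cdual_cscale)
    with k show "x \<in> (\<lambda>x. x - h x *\<^sub>C a) -` cspan S"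
      by simp
  qed (auto simp: cspan_insert)
  then show ?thesis
    using assms bounded_linear_diff_cdual_cscale[OF \<open>h \<in> cdual\<close>, of a]
    by (simp add: continuous_closed_vimage linear_continuous_at)
qed

lemma closed_cspan_Un_finite:
  assumes "csubspace S" "closed S" "finite F"
  shows "closed (cspan (S \<union> F))"
  using \<open>finite F\<close>
proof (induction F rule: finite_induct)
  case empty
  then show ?case
    using assms by (simp add: cspan_csubspace)
next
  case (insert y F)
  then show ?case
    using closed_cspan_insert[of "S \<union> F" y] by simp
qed

lemma chain_cspan_coefficient_unique:
  assumes "chain\<^sub>\<subseteq> C" "N1 \<in> C" "N \<in> C" and y: "y \<notin> cspan (N1 \<union> F)"
    and k1: "x - k1 *\<^sub>C y \<in> cspan (N1 \<union> F)" and k: "x - k *\<^sub>C y \<in> cspan (N \<union> F)"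
  shows "x - k1 *\<^sub>C y \<in> cspan (N \<union> F)"
proof (cases "N1 \<subseteq> N")
  case True
  then show ?thesis
    using k1 cspan_mono[of "N1 \<union> F" "N \<union> F"] by blast
next
  case False
  then have "N \<subseteq> N1"
    using assms(1-3) by (auto simp: chain_subset_def)
  with k have "x - k *\<^sub>C y \<in> cspan (N1 \<union> F)"
    using cspan_mono[of "N \<union> F" "N1 \<union> F"] by blast
  then have "(x - k1 *\<^sub>C y) - (x - k *\<^sub>C y) \<in> cspan (N1 \<union> F)"
    using k1 csubspace_diff[OF csubspace_cspan] by blast
  then have "(k - k1) *\<^sub>C y \<in> cspan (N1 \<union> F)"
    by (simp add: cscale_diff_left)
  then have "k = k1"
    using cscale_mem_csubspace_iff[OF csubspace_cspan y] by simp
  with k show ?thesis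
    by simp
qed

lemma cspan_Un_Inter_chain:
  assumes C: "\<And>N. N \<in> C \<Longrightarrow> csubspace N" "chain\<^sub>\<subseteq> C" and "finite F"
  shows "(\<Inter>N\<in>C. cspan (N \<union> F)) \<subseteq> cspan (\<Inter>C \<union> F)"
  using \<open>finite F\<close>
proof (induction F rule: finite_induct)
  case empty
  show ?case
    using C(1) cspan_superset by (simp add: cspan_csubspace) blast
next
  case (insert y F)
  show ?case
  proof
    fix x assume "x \<in> (\<Inter>N\<in>C. cspan (N \<union> insert y F))"
    then have coeff: "\<exists>k. x - k *\<^sub>C y \<in> cspan (N \<union> F)" if "N \<in> C" for N
      using that by (auto simp: cspan_insert)
    have "\<exists>k. \<forall>N\<in>C. x - k *\<^sub>C y \<in> cspan (N \<union> F)"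
    proof (cases "y \<in> cspan (\<Inter>C \<union> F)")
      case True
      have "x \<in> cspan (N \<union> F)" if N: "N \<in> C" for N
      proof -
        obtain k where "x - k *\<^sub>C y \<in> cspan (N \<union> F)"
          using coeff[OF N] by blast
        moreover have "y \<in> cspan (N \<union> F)"
          using True cspan_mono[of "\<Inter>C \<union> F" "N \<union> F"] N by blast
        ultimately have "(x - k *\<^sub>C y) + k *\<^sub>C y \<in> cspan (N \<union> F)"
          using csubspace_add[OF csubspace_cspan] csubspace_cscale[OF csubspace_cspan] by blast
        then show ?thesis
          by simp
      qed
      then show ?thesis
        by (intro exI[of _ 0]) simp
    next
      case False
      then obtain N1 where "N1 \<in> C" and y: "y \<notin> cspan (N1 \<union> F)"
        using insert.IH by blast
      then obtain k1 where k1: "x - k1 *\<^sub>C y \<in> cspan (N1 \<union> F)"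
        using coeff by blast
      have "x - k1 *\<^sub>C y \<in> cspan (N \<union> F)" if "N \<in> C" for N
        using coeff[OF that] chain_cspan_coefficient_unique[OF C(2) \<open>N1 \<in> C\<close> that y k1] by blast
      then show ?thesis
        by blast
    qed
    then obtain k where "x - k *\<^sub>C y \<in> cspan (\<Inter>C \<union> F)"
      using insert.IH by blast
    then show "x \<in> cspan (\<Inter>C \<union> insert y F)"
      by (auto simp: cspan_insert)
  qed
qed

lemma annih_antimono: "S \<subseteq> T \<Longrightarrow> annih T \<subseteq> annih S"
  unfolding annih_def by blast

lemma annih_separating_point:
  assumes "closed_csubspace N" "finite F" "x \<notin> cspan (N \<union> F)"
  obtains h where "h \<in> annih N" "h x = 1" "\<And>z. z \<in> F \<Longrightarrow> h z = 0"
proof -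
  have "closed (cspan (N \<union> F))"
    using assms(1,2) closed_cspan_Un_finite by (auto simp: closed_csubspace_iff)
  then obtain h where h: "h \<in> annih (cspan (N \<union> F))" "h x = 1"
    using cdual_separating[OF csubspace_cspan _ assms(3)] by blast
  moreover have "h \<in> annih (N \<union> F)"
    using h(1) annih_antimono[OF cspan_superset] by blast
  ultimately show ?thesis
    using that[of h] by (auto simp: annih_def)
qed

lemma chain_annih_interpolation:
  assumes C: "\<And>N. N \<in> C \<Longrightarrow> closed_csubspace N" "chain\<^sub>\<subseteq> C" "C \<noteq> {}"
    and f: "f \<in> annih (\<Inter>C)" and "finite F"
  shows "\<exists>N\<in>C. \<exists>g\<in>annih N. \<forall>x\<in>F. g x = f x"
  using \<open>finite F\<close>
proof (induction F rule: finite_induct)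
  case empty
  then show ?case
    using \<open>C \<noteq> {}\<close> cdual_zero by (auto simp: annih_def)
next
  case (insert x F)
  then obtain N1 g1 where "N1 \<in> C" "g1 \<in> annih N1" and g1: "\<forall>z\<in>F. g1 z = f z"
    by blast
  define k where "k z = f z - g1 z" for z
  have "k \<in> cdual"
    unfolding k_def using f \<open>g1 \<in> annih N1\<close> by (simp add: annih_def cdual_minus)
  show ?case
  proof (cases "k x = 0")
    case True
    then show ?thesis
      using \<open>N1 \<in> C\<close> \<open>g1 \<in> annih N1\<close> g1 by (auto simp: k_def)
  next
    case False
    have "\<Inter>C \<union> F \<subseteq> {z. k z = 0}"
      using f \<open>g1 \<in> annih N1\<close> \<open>N1 \<in> C\<close> g1 by (auto simp: k_def annih_def)
    then have "x \<notin> cspan (\<Inter>C \<union> F)"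
      using cspan_minimal[OF _ csubspace_kernel[OF \<open>k \<in> cdual\<close>]] False by blast
    then obtain N where "N \<in> C" "x \<notin> cspan (N \<union> F)"
      using cspan_Un_Inter_chain[OF _ C(2) \<open>finite F\<close>] C(1) by (auto simp: closed_csubspace_iff)
    moreover have "N \<subseteq> N1 \<or> N1 \<subseteq> N"
      using C(2) \<open>N \<in> C\<close> \<open>N1 \<in> C\<close> by (simp add: chain_subset_def)
    then obtain N2 where "N2 \<in> C" "N2 \<subseteq> N" "N2 \<subseteq> N1"
      using \<open>N \<in> C\<close> \<open>N1 \<in> C\<close> by blast
    ultimately have "x \<notin> cspan (N2 \<union> F)"
      using cspan_mono[of "N2 \<union> F" "N \<union> F"] by blast
    then obtain h where h: "h \<in> annih N2" "h x = 1" "\<And>z. z \<in> F \<Longrightarrow> h z = 0"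
      using annih_separating_point C(1)[OF \<open>N2 \<in> C\<close>] \<open>finite F\<close> by blast
    define g where "g z = g1 z + k x * h z" for z
    have "g \<in> annih N2"
      using \<open>g1 \<in> annih N1\<close> \<open>N2 \<subseteq> N1\<close> h(1)
      unfolding g_def annih_def by (auto intro: cdual_plus cdual_mult)
    moreover have "\<forall>z\<in>insert x F. g z = f z"
      using h(2,3) g1 by (auto simp: g_def k_def)
    ultimately show ?thesis
      using \<open>N2 \<in> C\<close> by blast
  qed
qed

section \<open>Weak* closures and nests\<close>

lemma fspan_superset: "S \<subseteq> fspan S"
proof
  fix g assume "g \<in> S"
  then show "g \<in> fspan S"
    unfolding fspan_def
    by (intro CollectI exI[of _ "1::nat"] exI[of _ "\<lambda>_. 1"] exI[of _ "\<lambda>_. g"]) auto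
qed

lemma zero_in_fspan: "(\<lambda>x. 0) \<in> fspan S"
  unfolding fspan_def by (intro CollectI exI[of _ "0::nat"]) auto

lemma fspan_vanishes: "(\<And>g. g \<in> S \<Longrightarrow> g s = 0) \<Longrightarrow> h \<in> fspan S \<Longrightarrow> h s = 0"
  unfolding fspan_def by (auto intro: sum.neutral)

lemma wstar_closureI:
  assumes "f \<in> cdual" and "\<And>F. finite F \<Longrightarrow> \<exists>g\<in>T. \<forall>x\<in>F. g x = f x"
  shows "f \<in> wstar_closure T"
  unfolding wstar_closure_def
proof (intro CollectI conjI allI impI)
  fix F :: "'a set" and e :: real
  assume "finite F \<and> e > 0"
  then obtain g where "g \<in> T" "\<forall>x\<in>F. g x = f x"
    using assms(2) by blast
  with \<open>finite F \<and> e > 0\<close> show "\<exists>g\<in>T. \<forall>x\<in>F. cmod (f x - g x) < e"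
    by (intro bexI[of _ g]) auto
qed (rule assms(1))

lemma wstar_closure_fspan_subset_annih:
  assumes "S \<subseteq> annih E"
  shows "wstar_closure (fspan S) \<subseteq> annih E"
proof
  fix f assume f: "f \<in> wstar_closure (fspan S)"
  have "f s = 0" if "s \<in> E" for s
  proof (rule ccontr)
    assume "f s \<noteq> 0"
    then have "finite {s} \<and> cmod (f s) > 0"
      by simp
    then obtain h where "h \<in> fspan S" "cmod (f s - h s) < cmod (f s)"
      using f unfolding wstar_closure_def by blast
    moreover have "h s = 0"
      using fspan_vanishes[OF _ \<open>h \<in> fspan S\<close>] assms that by (auto simp: annih_def)
    ultimately show False
      by simp
  qed
  then show "f \<in> annih E"
    using f by (simp add: wstar_closure_def annih_def)
qed

lemma nest_closed_csubspace: "nest \<E> \<Longrightarrow> N \<in> \<E> \<Longrightarrow> closed_csubspace N"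
  and nest_linear: "nest \<E> \<Longrightarrow> M \<in> \<E> \<Longrightarrow> N \<in> \<E> \<Longrightarrow> M \<subseteq> N \<or> N \<subseteq> M"
  and nest_UNIV: "nest \<E> \<Longrightarrow> UNIV \<in> \<E>"
  unfolding nest_def by simp_all

lemma nest_succ_superset: "N \<subseteq> nest_succ \<E> N"
  unfolding nest_succ_def by blast

lemma nest_subset_of_psubset_succ:
  assumes "nest \<E>" "E \<in> \<E>" "N \<in> \<E>" "E \<subset> nest_succ \<E> N"
  shows "E \<subseteq> N"
proof (rule ccontr)
  assume "\<not> E \<subseteq> N"
  then have "N \<subset> E"
    using nest_linear[OF assms(1-3)] by blast
  then have "nest_succ \<E> N \<subseteq> E"
    using assms(2) unfolding nest_succ_def by blast
  with assms(4) show False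
    by blast
qed

lemma nest_generators_subset_annih:
  assumes "nest \<E>" "E \<in> \<E>"
  shows "\<Union>{annih N | N. N \<in> \<E> \<and> E \<subset> nest_succ \<E> N} \<subseteq> annih E"
proof
  fix g assume "g \<in> \<Union>{annih N | N. N \<in> \<E> \<and> E \<subset> nest_succ \<E> N}"
  then obtain N where "N \<in> \<E>" "E \<subset> nest_succ \<E> N" "g \<in> annih N"
    by blast
  then show "g \<in> annih E"
    using nest_subset_of_psubset_succ[OF assms] annih_antimono by blast
qed

lemma nest_annih_interpolation:
  assumes "nest \<E>" "E \<in> \<E>" "E \<noteq> UNIV" "f \<in> annih E" "finite F"
  obtains N g where "N \<in> \<E>" "E \<subset> nest_succ \<E> N" "g \<in> annih N" "\<forall>x\<in>F. g x = f x"
proof (cases "E \<subset> nest_succ \<E> E")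
  case True
  then show ?thesis
    using that assms(2,4) by blast
next
  case False
  define C where "C = {N \<in> \<E>. E \<subset> N}"
  have "E = \<Inter>C"
    using False nest_succ_superset[of E \<E>] unfolding nest_succ_def C_def by blast
  moreover have "C \<noteq> {}"
    using nest_UNIV[OF assms(1)] assms(3) unfolding C_def by blast
  moreover have "chain\<^sub>\<subseteq> C"
    using nest_linear[OF assms(1)] unfolding C_def chain_subset_def by blast
  moreover have "closed_csubspace N" if "N \<in> C" for N
    using nest_closed_csubspace[OF assms(1)] that unfolding C_def by blast
  ultimately obtain N g where "N \<in> C" "g \<in> annih N" "\<forall>x\<in>F. g x = f x"
    using chain_annih_interpolation[of C f F] assms(4,5) by blast
  moreover from \<open>N \<in> C\<close> have "E \<subset> nest_succ \<E> N"
    using nest_succ_superset[of N \<E>] unfolding C_def by blast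
  ultimately show ?thesis
    using that unfolding C_def by blast
qed

theorem mainTheorem2:
  fixes \<E> :: "'a::complex_banach set set" and E :: "'a set"
  assumes "nest \<E>" and "E \<in> \<E>"
  shows "wstar_closure (fspan (\<Union>{annih N | N. N \<in> \<E> \<and> E \<subset> nest_succ \<E> N})) = annih E"
proof -
  define S where "S = \<Union>{annih N | N. N \<in> \<E> \<and> E \<subset> nest_succ \<E> N}"
  have "wstar_closure (fspan S) \<subseteq> annih E"
    unfolding S_def by (rule wstar_closure_fspan_subset_annih[OF nest_generators_subset_annih[OF assms]])
  moreover have "annih E \<subseteq> wstar_closure (fspan S)"
  proof (intro subsetI wstar_closureI)
    fix f and F :: "'a set"
    assume f: "f \<in> annih E" and "finite F"
    show "\<exists>g\<in>fspan S. \<forall>x\<in>F. g x = f x"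
    proof (cases "E = UNIV")
      case True
      then show ?thesis
        using f zero_in_fspan[of S] by (auto simp: annih_def)
    next
      case False
      then obtain N g where "N \<in> \<E>" "E \<subset> nest_succ \<E> N" "g \<in> annih N" "\<forall>x\<in>F. g x = f x"
        using nest_annih_interpolation[OF assms False f \<open>finite F\<close>] by blast
      then have "g \<in> S"
        unfolding S_def by blast
      with \<open>\<forall>x\<in>F. g x = f x\<close> show ?thesis
        using fspan_superset by blast
    qed
  qed (simp add: annih_def)
  ultimately show ?thesis
    unfolding S_def by (rule equalityI)
qed

end
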